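(* Let $\mathcal F=\{F^c_{t,k}\}$ be an F-system and $R,\lambda$ reals such that $|F^A_t\cup F^B_t|\le Rt+\lambda$ for every positive integer $t$. Then for every positive integer $t$, $|S_{2t,t}|\ge(6-4R)t-2\lambda$.
   Context: F-system: a family $\mathcal F=\{F^c_{t,k}\}$ of sets of positive integers, indexed by $c\in\{A,B\}$ and integers $0<k\le t$, such that (F1) $|F^c_{t,k}|\ge k$ for all $c,t,k$; and (F2) $F^A_{t,k}\cap F^B_{t',k'}=\emptyset$ for all $k\le t$, $k'\le t'$ with $k+k'\le\max(t,t')$. Notation: $F^c_t=\bigcup_{0<\kappa\le\tau\le t}F^c_{\tau,\kappa}$ for $c\in\{A,B\}$; $S_t=F^A_t\cap F^B_t$; $S_{2t,t}=S_{2t}\cap(F^A_{2t,t}\cup F^B_{2t,t})$. *)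

theory Defs
  imports Complex_Main
begin

datatype col = A | B

text \<open>An F-system: F c t k is the set F^c_{t,k}; only indices 0 < k \<le> t matter.
  Cardinality condition (F1) is read as |X| \<ge> k, where an infinite set has
  cardinality \<ge> k automatically.\<close>
definition F_system :: "(col \<Rightarrow> nat \<Rightarrow> nat \<Rightarrow> nat set) \<Rightarrow> bool" where
  "F_system F \<longleftrightarrow>
     (\<forall>c t k. 0 < k \<and> k \<le> t \<longrightarrow>
        F c t k \<subseteq> {0<..} \<and> (finite (F c t k) \<longrightarrow> k \<le> card (F c t k))) \<and>
     (\<forall>t k t' k'. 0 < k \<and> k \<le> t \<and> 0 < k' \<and> k' \<le> t' \<and> k + k' \<le> max t t'
        \<longrightarrow> F A t k \<inter> F B t' k' = {})"

definition Fu :: "(col \<Rightarrow> nat \<Rightarrow> nat \<Rightarrow> nat set) \<Rightarrow> col \<Rightarrow> nat \<Rightarrow> nat set" where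
  "Fu F c t = (\<Union>{F c \<tau> \<kappa> | \<tau> \<kappa>. 0 < \<kappa> \<and> \<kappa> \<le> \<tau> \<and> \<tau> \<le> t})"

definition S :: "(col \<Rightarrow> nat \<Rightarrow> nat \<Rightarrow> nat set) \<Rightarrow> nat \<Rightarrow> nat set" where
  "S F t = Fu F A t \<inter> Fu F B t"

definition S2 :: "(col \<Rightarrow> nat \<Rightarrow> nat \<Rightarrow> nat set) \<Rightarrow> nat \<Rightarrow> nat set" where
  "S2 F t = S F (2*t) \<inter> (F A (2*t) t \<union> F B (2*t) t)"

end

theory Submission
  imports Defs
begin

(* Fix t > 0 and put FA = F^A_{2t}, FB = F^B_{2t}, U = FA \<union> FB,
   X = F^A_{2t,t} \<subseteq> FA and Y = F^B_{2t,t} \<subseteq> FB.  By (F2), X and Y are disjoint,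
   and S_{2t,t} = FA \<inter> FB \<inter> (X \<union> Y).  A purely set-theoretic count gives
     |X| + |Y| + |FA| + |FB| \<le> 2|U| + |FA \<inter> FB \<inter> (X \<union> Y)|,
   since the part of X \<union> Y outside FA \<inter> FB lies in U - (FA \<inter> FB), whose size is
   |U| - |FA \<inter> FB| = 2|U| - |FA| - |FB|.  By (F1), |X|, |Y| \<ge> t and
   |FA|, |FB| \<ge> |F^c_{2t,2t}| \<ge> 2t, so 6t \<le> 2|U| + |S_{2t,t}|; the hypothesis
   |U| \<le> 2Rt + \<lambda> then yields the claim. *)

lemma card_core_lower_bound:
  assumes fin: "finite P" "finite Q"
    and sub: "X \<subseteq> P" "Y \<subseteq> Q" and disj: "X \<inter> Y = {}"
  shows "card X + card Y + card P + card Q \<le> 2 * card (P \<union> Q) + card (P \<inter> Q \<inter> (X \<union> Y))"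
proof -
  let ?U = "P \<union> Q" and ?I = "P \<inter> Q" and ?Z = "X \<union> Y"
  have finZ: "finite ?Z" using fin sub finite_subset by blast
  have "card X + card Y = card ?Z"
    using disj finZ by (simp add: card_Un_disjoint)
  also have "\<dots> = card (?I \<inter> ?Z) + card (?Z - ?I)"
    using finZ card_Int_Diff[of ?Z ?I] by (simp add: Int_commute)
  also have "card (?Z - ?I) \<le> card (?U - ?I)"
    using sub fin by (intro card_mono) auto
  also have "card (?U - ?I) = card ?U - card ?I"
    using fin by (intro card_Diff_subset) auto
  finally have "card X + card Y \<le> card (?I \<inter> ?Z) + (card ?U - card ?I)" by simp
  moreover have "card P + card Q = card ?U + card ?I"
    using fin by (rule card_Un_Int)
  moreover have "card ?I \<le> card ?U"
    using fin by (intro card_mono) auto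
  ultimately show ?thesis by linarith
qed

lemma F_subset_Fu: "0 < k \<Longrightarrow> k \<le> t \<Longrightarrow> F c t k \<subseteq> Fu F c t"
  unfolding Fu_def by blast

lemma F_system_card_member:
  assumes "F_system F" "0 < k" "k \<le> t" "finite (Fu F c t)"
  shows "k \<le> card (F c t k)"
proof -
  have "finite (F c t k)"
    using assms(2-4) F_subset_Fu finite_subset by metis
  then show ?thesis using assms(1-3) unfolding F_system_def by blast
qed

lemma F_system_card_Fu:
  assumes "F_system F" "0 < t" "finite (Fu F c t)"
  shows "t \<le> card (Fu F c t)"
proof -
  have "t \<le> card (F c t t)"
    using F_system_card_member[OF assms(1,2) order_refl assms(3)] .
  also have "\<dots> \<le> card (Fu F c t)"
    using assms(2,3) F_subset_Fu by (intro card_mono) auto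
  finally show ?thesis .
qed

lemma F_system_disjoint:
  assumes "F_system F" "0 < k" "2 * k \<le> t"
  shows "F A t k \<inter> F B t k = {}"
  using assms unfolding F_system_def by auto

lemma S2_eq:
  "S2 F t = Fu F A (2*t) \<inter> Fu F B (2*t) \<inter> (F A (2*t) t \<union> F B (2*t) t)"
  unfolding S2_def S_def by blast

lemma F_system_S2_bound:
  assumes F: "F_system F" and t: "0 < t"
    and fin: "finite (Fu F A (2*t) \<union> Fu F B (2*t))"
  shows "6 * t \<le> 2 * card (Fu F A (2*t) \<union> Fu F B (2*t)) + card (S2 F t)"
proof -
  have finA: "finite (Fu F A (2*t))" and finB: "finite (Fu F B (2*t))"
    using fin by auto
  have "t \<le> card (F A (2*t) t)" "t \<le> card (F B (2*t) t)"
    using F_system_card_member[OF F t] finA finB by auto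
  moreover have "2*t \<le> card (Fu F A (2*t))" "2*t \<le> card (Fu F B (2*t))"
    using F_system_card_Fu[OF F] t finA finB by auto
  moreover have "card (F A (2*t) t) + card (F B (2*t) t)
      + card (Fu F A (2*t)) + card (Fu F B (2*t))
      \<le> 2 * card (Fu F A (2*t) \<union> Fu F B (2*t)) + card (S2 F t)"
    unfolding S2_eq using t
    by (intro card_core_lower_bound finA finB F_subset_Fu F_system_disjoint[OF F]) auto
  ultimately show ?thesis by linarith
qed

theorem lemma3:
  fixes F :: "col \<Rightarrow> nat \<Rightarrow> nat \<Rightarrow> nat set" and R lam :: real
  assumes "F_system F"
    and "\<forall>t::nat. 0 < t \<longrightarrow> finite (Fu F A t \<union> Fu F B t) \<and>
            real (card (Fu F A t \<union> Fu F B t)) \<le> R * real t + lam"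
  shows "\<forall>t::nat. 0 < t \<longrightarrow> real (card (S2 F t)) \<ge> (6 - 4*R) * real t - 2*lam"
proof (intro allI impI)
  fix t :: nat assume t: "0 < t"
  let ?U = "Fu F A (2*t) \<union> Fu F B (2*t)"
  have fin: "finite ?U" and bound: "real (card ?U) \<le> R * real (2*t) + lam"
    using assms(2)[rule_format, of "2*t"] t by auto
  have "real (6 * t) \<le> real (2 * card ?U + card (S2 F t))"
    using F_system_S2_bound[OF assms(1) t fin] by linarith
  then show "real (card (S2 F t)) \<ge> (6 - 4*R) * real t - 2*lam"
    using bound by (simp add: algebra_simps)
qed

end
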